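(* Let $\lambda$ be a partition, $A=\mathcal{L}(\lambda)$, and let $i,j\ge1$ be integers with $\lambda[i,j]\neq()$. (1) If $\mathbb{SG}(A[i,j])=0$, then $d(\lambda[i,j])\ge1$ and $\mathbb{SG}(A[i-1,j-1])=0$. (2) If $\mathbb{SG}(A[i,j])=1$ and $d(\lambda[i,j])\ge2$, then $\mathbb{SG}(A[i-1,j-1])=1$. (3) If $\mathbb{SG}(A[i,j])=2$ and $d(\lambda[i,j])\ge3$, then $\mathbb{SG}(A[i-1,j-1])=2$.
   Context: A partition is a finite non-increasing sequence $\lambda=(\lambda_1,\dots,\lambda_r)$ of positive integers; $()$ is the empty partition. Durfee length: $d(\lambda)=\max\{k:\lambda_k\ge k\}$, and $d(())=0$. For non-negative $i,j$, $\lambda[i,j]$ is $(\lambda_{i+1}-j,\dots,\lambda_r-j)$ with all non-positive entries removed. LCTR: positions $\mathcal{L}(\mu)$; if $\mu\neq()$ the two moves go to $\mathcal{L}(\mu[1,0])$ and $\mathcal{L}(\mu[0,1])$; $\mathcal{L}(())$ is terminal. For $A=\mathcal{L}(\lambda)$, $A[i,j]=\mathcal{L}(\lambda[i,j])$. Normal play; $\mathbb{SG}(A)=\operatorname{mex}\{\mathbb{SG}(B):A\to B\}$. *)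

theory Defs
  imports Main
begin

text \<open>A partition is a list of naturals, non-increasing, with positive entries.
  The LCTR position L(mu) is identified with the partition mu.\<close>
definition is_partition :: "nat list \<Rightarrow> bool" where
  "is_partition l \<longleftrightarrow> sorted_wrt (\<ge>) l \<and> (\<forall>x\<in>set l. 0 < x)"

text \<open>lambda[i,j] = (lambda_{i+1}-j, ..., lambda_r-j) with non-positive entries removed.
  Truncated nat subtraction sends non-positive values to 0, which are then removed.\<close>
definition psub :: "nat list \<Rightarrow> nat \<Rightarrow> nat \<Rightarrow> nat list" where
  "psub l i j = filter (\<lambda>x. 0 < x) (map (\<lambda>x. x - j) (drop i l))"

definition durfee :: "nat list \<Rightarrow> nat" where
  "durfee l = Max ({0} \<union> {k. 1 \<le> k \<and> k \<le> length l \<and> k \<le> l ! (k - 1)})"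

definition mex :: "nat set \<Rightarrow> nat" where
  "mex S = (LEAST n. n \<notin> S)"

lemma psub_f0: "length (filter ((<) 0) xs) + sum_list (filter ((<) (0::nat)) xs) \<le> length xs + sum_list xs"
  by (induction xs) auto

lemma psub_f1: "xs \<noteq> [] \<Longrightarrow> length (filter ((<) 0) (map (\<lambda>x. x - 1) xs)) + sum_list (filter ((<) 0) (map (\<lambda>x. x - 1) xs)) < length xs + sum_list (xs::nat list)"
proof (induction xs)
  case (Cons x xs)
  then show ?case by (cases "xs = []") auto
qed simp

lemma psub_dec10: "l \<noteq> [] \<Longrightarrow> length (psub l 1 0) + sum_list (psub l 1 0) < length l + sum_list l"
  unfolding psub_def using psub_f0[of "tl l"] by (cases l) auto

lemma psub_dec01: "l \<noteq> [] \<Longrightarrow> length (psub l 0 1) + sum_list (psub l 0 1) < length l + sum_list l"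
  unfolding psub_def using psub_f1[of l] by simp

text \<open>Sprague-Grundy value of the LCTR position L(mu): L(()) is terminal,
  otherwise the moves go to L(mu[1,0]) and L(mu[0,1]).\<close>
function SG :: "nat list \<Rightarrow> nat" where
  "SG l = (if l = [] then 0 else mex {SG (psub l 1 0), SG (psub l 0 1)})"
  by auto
termination
  by (relation "measure (\<lambda>l. length l + sum_list l)")
     (simp_all add: psub_dec10[simplified] psub_dec01[simplified])

end

theory Submission
  imports Defs
begin

text \<open>View the positions \<open>\<lambda>[a,b]\<close> as a grid game: from \<open>(a,b)\<close> one moves to
  \<open>(a+1,b)\<close> or \<open>(a,b+1)\<close>, and the nonempty positions form a down-set. If \<open>(a+1,b+1)\<close>
  has value 0, neither \<open>(a+1,b)\<close> nor \<open>(a,b+1)\<close> can be a P-position, since both move to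
  it; hence \<open>(a,b)\<close> has value 0. For value 1 (resp. 2), one of the two options of
  \<open>(a+1,b+1)\<close> has value 0 (and the other value 1), and the previous case(s) applied one
  step further along the diagonal determine the options of \<open>(a,b)\<close>. The Durfee bound
  guarantees that the positions needed along the diagonal are nonempty.\<close>

(* The defining equation of SG is an unguarded recursive rewrite rule: left in the simp set,
   it loops on every goal mentioning SG. *)
declare SG.simps [simp del]

lemma mex_eq_iff:
  assumes "finite S"
  shows "mex S = n \<longleftrightarrow> n \<notin> S \<and> {..<n} \<subseteq> S"
  unfolding mex_def
proof
  have "\<exists>k. k \<notin> S" using ex_new_if_finite[OF infinite_UNIV_nat assms] by blast
  then have "(LEAST n. n \<notin> S) \<notin> S" by (rule LeastI_ex)
  moreover assume "(LEAST n. n \<notin> S) = n"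
  ultimately show "n \<notin> S \<and> {..<n} \<subseteq> S"
    using not_less_Least by blast
next
  assume "n \<notin> S \<and> {..<n} \<subseteq> S"
  then show "(LEAST n. n \<notin> S) = n"
    by (intro Least_equality) (meson leI lessThan_iff subsetD)+
qed

lemma mex_pair_eq_0: "mex {x, y} = 0 \<longleftrightarrow> x \<noteq> 0 \<and> y \<noteq> 0"
  by (auto simp: mex_eq_iff)

lemma mex_pair_eq_1: "mex {x, y} = 1 \<longleftrightarrow> (x = 0 \<or> y = 0) \<and> x \<noteq> 1 \<and> y \<noteq> 1"
  by (auto simp: mex_eq_iff lessThan_Suc)

lemma mex_pair_eq_2: "mex {x, y} = 2 \<longleftrightarrow> x = 0 \<and> y = 1 \<or> x = 1 \<and> y = 0"
  by (auto simp: mex_eq_iff numeral_eq_Suc lessThan_Suc)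

locale grid_game =
  fixes G :: "nat \<Rightarrow> nat \<Rightarrow> nat" and N :: "nat \<Rightarrow> nat \<Rightarrow> bool"
  assumes G_rec: "N a b \<Longrightarrow> G a b = mex {G (Suc a) b, G a (Suc b)}"
    and N_downward: "N a b \<Longrightarrow> a' \<le> a \<Longrightarrow> b' \<le> b \<Longrightarrow> N a' b'"
begin

lemma diag_propagate_0:
  assumes N: "N (Suc a) (Suc b)" and G: "G (Suc a) (Suc b) = 0"
  shows "G a b = 0"
proof -
  have N_below: "N (Suc a) b" "N a (Suc b)" "N a b"
    by (auto intro: N_downward[OF N])
  have "G (Suc a) b \<noteq> 0" and "G a (Suc b) \<noteq> 0"
    using G_rec[OF N_below(1)] G_rec[OF N_below(2)] G by (simp_all add: mex_pair_eq_0)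
  then show ?thesis
    using G_rec[OF N_below(3)] by (simp add: mex_pair_eq_0)
qed

lemma diag_propagate_1:
  assumes N: "N (Suc (Suc a)) (Suc (Suc b))" and G: "G (Suc a) (Suc b) = 1"
  shows "G a b = 1"
proof -
  have N_below: "N (Suc (Suc a)) (Suc b)" "N (Suc a) (Suc (Suc b))" "N (Suc a) (Suc b)"
      "N (Suc a) b" "N a (Suc b)" "N a b"
    by (auto intro: N_downward[OF N])
  have "G (Suc (Suc a)) (Suc b) = 0 \<or> G (Suc a) (Suc (Suc b)) = 0"
    using G unfolding G_rec[OF N_below(3)] mex_pair_eq_1 by (rule conjunct1)
  then show ?thesis
    unfolding G_rec[OF N_below(6)] mex_pair_eq_1
  proof
    assume "G (Suc (Suc a)) (Suc b) = 0"
    then have "G (Suc a) b = 0"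
      by (rule diag_propagate_0[OF N_below(1)])
    moreover have "G a (Suc b) \<noteq> 1"
      unfolding G_rec[OF N_below(5)] G mex_pair_eq_1 by simp
    ultimately show "(G (Suc a) b = 0 \<or> G a (Suc b) = 0) \<and> G (Suc a) b \<noteq> 1 \<and> G a (Suc b) \<noteq> 1"
      by simp
  next
    assume "G (Suc a) (Suc (Suc b)) = 0"
    then have "G a (Suc b) = 0"
      by (rule diag_propagate_0[OF N_below(2)])
    moreover have "G (Suc a) b \<noteq> 1"
      unfolding G_rec[OF N_below(4)] G mex_pair_eq_1 by simp
    ultimately show "(G (Suc a) b = 0 \<or> G a (Suc b) = 0) \<and> G (Suc a) b \<noteq> 1 \<and> G a (Suc b) \<noteq> 1"
      by simp
  qed
qed

lemma diag_propagate_2: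
  assumes N: "N (Suc (Suc (Suc a))) (Suc (Suc (Suc b)))" and G: "G (Suc a) (Suc b) = 2"
  shows "G a b = 2"
proof -
  have N_below: "N (Suc (Suc a)) (Suc b)" "N (Suc a) (Suc (Suc b))" "N (Suc a) (Suc b)"
      "N (Suc (Suc (Suc a))) (Suc (Suc b))" "N (Suc (Suc a)) (Suc (Suc (Suc b)))" "N a b"
    by (auto intro: N_downward[OF N])
  have "G (Suc (Suc a)) (Suc b) = 0 \<and> G (Suc a) (Suc (Suc b)) = 1
      \<or> G (Suc (Suc a)) (Suc b) = 1 \<and> G (Suc a) (Suc (Suc b)) = 0"
    using G[unfolded G_rec[OF N_below(3)]] by (simp add: mex_pair_eq_2)
  then show ?thesis
  proof
    assume "G (Suc (Suc a)) (Suc b) = 0 \<and> G (Suc a) (Suc (Suc b)) = 1"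
    then have "G (Suc a) b = 0" and "G a (Suc b) = 1"
      using diag_propagate_0[OF N_below(1)] diag_propagate_1[OF N_below(5)] by simp_all
    then show ?thesis
      using G_rec[OF N_below(6)] by (simp add: mex_pair_eq_2)
  next
    assume "G (Suc (Suc a)) (Suc b) = 1 \<and> G (Suc a) (Suc (Suc b)) = 0"
    then have "G a (Suc b) = 0" and "G (Suc a) b = 1"
      using diag_propagate_0[OF N_below(2)] diag_propagate_1[OF N_below(4)] by simp_all
    then show ?thesis
      using G_rec[OF N_below(6)] by (simp add: mex_pair_eq_2)
  qed
qed

end

lemma drop_filter_pos_map_diff:
  assumes "sorted_wrt (\<ge>) (xs :: nat list)"
  shows "drop c (filter ((<) 0) (map (\<lambda>x. x - b) xs)) = filter ((<) 0) (map (\<lambda>x. x - b) (drop c xs))"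
  using assms
proof (induction xs arbitrary: c)
  case (Cons x xs)
  show ?case
  proof (cases "0 < x - b")
    case True
    then show ?thesis using Cons by (cases c) auto
  next
    case False
    \<comment> \<open>then every later entry is cut off as well, so both sides are empty\<close>
    with Cons.prems have "\<forall>y\<in>set xs. y - b = 0" by auto
    then show ?thesis
      using False by (cases c) (auto simp: filter_empty_conv empty_filter_conv dest: in_set_dropD)
  qed
qed simp

lemma filter_map_diff_twice:
  "filter ((<) 0) (map (\<lambda>x. x - d) (filter ((<) 0) (map (\<lambda>x. x - b) (xs :: nat list))))
   = filter ((<) 0) (map (\<lambda>x. x - (b + d)) xs)"
  by (induction xs) auto

lemma psub_psub:
  assumes "is_partition l"
  shows "psub (psub l a b) c d = psub l (a + c) (b + d)"
proof -
  have "sorted_wrt (\<ge>) (drop a l)"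
    using assms by (simp add: is_partition_def sorted_wrt_drop)
  then show ?thesis
    unfolding psub_def
    using drop_filter_pos_map_diff filter_map_diff_twice by (simp add: add.commute)
qed

lemma psub_Nil: "psub [] a b = []"
  by (simp add: psub_def)

lemma psub_nonempty_downward:
  assumes "is_partition l" and "psub l a b \<noteq> []" and "a' \<le> a" and "b' \<le> b"
  shows "psub l a' b' \<noteq> []"
proof -
  have "psub (psub l a' b') (a - a') (b - b') \<noteq> []"
    using assms by (simp add: psub_psub)
  then show ?thesis
    using psub_Nil by metis
qed

lemma SG_psub_rec:
  assumes "is_partition l" and "psub l a b \<noteq> []"
  shows "SG (psub l a b) = mex {SG (psub l (Suc a) b), SG (psub l a (Suc b))}"
  using assms by (subst SG.simps) (simp add: psub_psub)

lemma grid_game_psub: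
  assumes "is_partition l"
  shows "grid_game (\<lambda>a b. SG (psub l a b)) (\<lambda>a b. psub l a b \<noteq> [])"
proof
  show "SG (psub l a b) = mex {SG (psub l (Suc a) b), SG (psub l a (Suc b))}"
    if "psub l a b \<noteq> []" for a b
    using assms that by (rule SG_psub_rec)
  show "psub l a' b' \<noteq> []" if "psub l a b \<noteq> []" "a' \<le> a" "b' \<le> b" for a b a' b'
    using assms that by (rule psub_nonempty_downward)
qed

lemma psub_nonempty:
  assumes "a < length l" and "b < l ! a"
  shows "psub l a b \<noteq> []"
proof -
  have "l ! a \<in> set (drop a l)"
    using assms(1) by (metis Cons_nth_drop_Suc list.set_intros(1))
  then have "l ! a - b \<in> set (psub l a b)"
    using assms(2) by (simp add: psub_def)
  then show ?thesis by auto
qed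

lemma sorted_psub:
  assumes "sorted_wrt (\<ge>) l"
  shows "sorted_wrt (\<ge>) (psub l a b)"
proof -
  have "sorted_wrt (\<lambda>x y. y - b \<le> x - b) (drop a l)"
    using sorted_wrt_drop[OF assms] by (rule sorted_wrt_mono_rel[rotated]) (rule diff_le_mono)
  then show ?thesis
    by (simp add: psub_def sorted_wrt_filter sorted_wrt_map)
qed

lemma finite_durfee_set: "finite ({0} \<union> {k. 1 \<le> k \<and> k \<le> length l \<and> k \<le> l ! (k - 1)})"
  by (rule finite_subset[of _ "{0..length l}"]) auto

lemma durfee_mem: "durfee l \<in> {0} \<union> {k. 1 \<le> k \<and> k \<le> length l \<and> k \<le> l ! (k - 1)}"
  unfolding durfee_def by (rule Max_in[OF finite_durfee_set]) simp

lemma durfee_ge_imp_nth: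
  assumes "sorted_wrt (\<ge>) l" and "Suc m \<le> durfee l"
  shows "m < length l \<and> Suc m \<le> l ! m"
proof -
  define k where "k = durfee l"
  have k: "k \<le> length l" "k \<le> l ! (k - 1)" and "Suc m \<le> k"
    using durfee_mem[of l] assms(2) unfolding k_def by auto
  moreover have "l ! (k - 1) \<le> l ! m"
  proof (cases "m = k - 1")
    case False
    then have "m < k - 1" using \<open>Suc m \<le> k\<close> by simp
    moreover have "k - 1 < length l" using k(1) \<open>Suc m \<le> k\<close> by simp
    ultimately show ?thesis
      by (rule sorted_wrt_nth_less[OF assms(1)])
  qed simp
  ultimately show ?thesis by simp
qed

lemma durfee_ge_1:
  assumes "l \<noteq> []" and "\<forall>x\<in>set l. 0 < x"
  shows "1 \<le> durfee l"
proof -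
  have "1 \<le> l ! 0" using assms by (simp add: Suc_le_eq)
  then have "1 \<in> {0} \<union> {k. 1 \<le> k \<and> k \<le> length l \<and> k \<le> l ! (k - 1)}"
    using assms(1) by (simp add: Suc_le_eq)
  then show ?thesis
    unfolding durfee_def by (rule Max_ge[OF finite_durfee_set])
qed

lemma psub_diag_nonempty:
  assumes "is_partition l" and "Suc m \<le> durfee (psub l a b)"
  shows "psub l (a + m) (b + m) \<noteq> []"
proof -
  have "sorted_wrt (\<ge>) (psub l a b)"
    using assms(1) sorted_psub by (auto simp: is_partition_def)
  then have "psub (psub l a b) m m \<noteq> []"
    using durfee_ge_imp_nth[OF _ assms(2)] psub_nonempty by simp
  then show ?thesis using assms(1) by (simp add: psub_psub)
qed

theorem mainTheorem10:
  fixes lam :: "nat list" and i j :: nat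
  assumes "is_partition lam" and "1 \<le> i" and "1 \<le> j"
    and "psub lam i j \<noteq> []"
  shows "(SG (psub lam i j) = 0 \<longrightarrow>
            durfee (psub lam i j) \<ge> 1 \<and> SG (psub lam (i - 1) (j - 1)) = 0)
       \<and> (SG (psub lam i j) = 1 \<and> durfee (psub lam i j) \<ge> 2 \<longrightarrow>
            SG (psub lam (i - 1) (j - 1)) = 1)
       \<and> (SG (psub lam i j) = 2 \<and> durfee (psub lam i j) \<ge> 3 \<longrightarrow>
            SG (psub lam (i - 1) (j - 1)) = 2)"
proof -
  interpret grid_game "\<lambda>a b. SG (psub lam a b)" "\<lambda>a b. psub lam a b \<noteq> []"
    by (rule grid_game_psub[OF assms(1)])
  obtain a where i: "i = Suc a"
    using assms(2) by (cases i) auto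
  obtain b where j: "j = Suc b"
    using assms(3) by (cases j) auto
  have "1 \<le> durfee (psub lam i j)"
    using assms(4) by (rule durfee_ge_1) (simp add: psub_def)
  moreover have "SG (psub lam a b) = 0" if "SG (psub lam i j) = 0"
    using assms(4) that unfolding i j by (rule diag_propagate_0)
  moreover have "SG (psub lam a b) = 1" if "SG (psub lam i j) = 1" "2 \<le> durfee (psub lam i j)"
  proof (rule diag_propagate_1)
    show "psub lam (Suc (Suc a)) (Suc (Suc b)) \<noteq> []"
      using psub_diag_nonempty[OF assms(1), of 1 i j] that(2) unfolding i j by simp
  qed (use that(1) i j in simp)
  moreover have "SG (psub lam a b) = 2" if "SG (psub lam i j) = 2" "3 \<le> durfee (psub lam i j)"
  proof (rule diag_propagate_2)
    show "psub lam (Suc (Suc (Suc a))) (Suc (Suc (Suc b))) \<noteq> []"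
      using psub_diag_nonempty[OF assms(1), of 2 i j] that(2) unfolding i j by simp
  qed (use that(1) i j in simp)
  ultimately show ?thesis
    unfolding i j by simp
qed

end
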